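(* Let $\tilde i\ge1$ be an integer and let $\alpha_0,\alpha_1,\dots,\alpha_{\tilde i+1}$ be positive real numbers. Then $$\sum_{i=1}^{\tilde i+1}\left[\prod_{j=i+1}^{\tilde i+1}\left(\frac{\alpha_{j-1}}{\alpha_j}\right)^{2^{\tilde i-j+2}}\right]\left(\alpha_i^{2^{\tilde i-i+2}-1}-\alpha_{i-1}^{2^{\tilde i-i+2}-1}\right)\alpha_i^{-2^{\tilde i-i+2}}\le\alpha_{\tilde i+1}^{-1}.$$
   Context: An empty product (when $i=\tilde i+1$) equals $1$. *)

theory Defs
  imports Complex_Main
begin

end

theory Submission
  imports Defs
begin

text \<open>Let \<open>S k\<close> be the sum truncated at \<open>k\<close>. Splitting off the last factor of every
  product gives \<open>S (k+1) = (\<alpha> k / \<alpha> (k+1))^e * S k + (\<alpha> (k+1)^(e-1) - \<alpha> k^(e-1)) / \<alpha> (k+1)^e\<close>.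
  If \<open>S k \<le> 1 / \<alpha> k\<close>, the first summand is at most \<open>\<alpha> k^(e-1) / \<alpha> (k+1)^e\<close>, which
  cancels the negative part of the second, leaving \<open>1 / \<alpha> (k+1)\<close>. Induction from
  \<open>S 0 = 0\<close> gives the bound for every \<open>k\<close> and any exponents \<open>e j \<ge> 1\<close>.\<close>

definition weighted_increment_sum :: "(nat \<Rightarrow> real) \<Rightarrow> (nat \<Rightarrow> nat) \<Rightarrow> nat \<Rightarrow> real" where
  "weighted_increment_sum a e k =
     (\<Sum>i = 1..k. (\<Prod>j = i+1..k. (a (j - 1) / a j) ^ e j)
        * (a i ^ (e i - 1) - a (i - 1) ^ (e i - 1)) / a i ^ e i)"

lemma weighted_increment_sum_0 [simp]: "weighted_increment_sum a e 0 = 0"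
  by (simp add: weighted_increment_sum_def)

lemma weighted_increment_sum_Suc:
  "weighted_increment_sum a e (Suc k) =
     (a k / a (Suc k)) ^ e (Suc k) * weighted_increment_sum a e k
     + (a (Suc k) ^ (e (Suc k) - 1) - a k ^ (e (Suc k) - 1)) / a (Suc k) ^ e (Suc k)"
proof -
  define t where "t n i = (\<Prod>j = i+1..n. (a (j - 1) / a j) ^ e j)
    * (a i ^ (e i - 1) - a (i - 1) ^ (e i - 1)) / a i ^ e i" for n i
  have "t (Suc k) i = (a k / a (Suc k)) ^ e (Suc k) * t k i" if "i \<in> {1..k}" for i
    using that by (simp add: t_def prod.nat_ivl_Suc')
  then have "(\<Sum>i = 1..k. t (Suc k) i) = (a k / a (Suc k)) ^ e (Suc k) * (\<Sum>i = 1..k. t k i)"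
    by (simp add: sum_distrib_left)
  moreover have "weighted_increment_sum a e n = (\<Sum>i = 1..n. t n i)" for n
    by (simp add: weighted_increment_sum_def t_def)
  ultimately show ?thesis
    by (simp add: t_def)
qed

lemma weighted_increment_step_le:
  fixes a b F :: real
  assumes "a > 0" "b > 0" "F \<le> 1 / a"
  shows "(a / b) ^ Suc d * F + (b ^ d - a ^ d) / b ^ Suc d \<le> 1 / b"
proof -
  have "(a / b) ^ Suc d * F \<le> (a / b) ^ Suc d * (1 / a)"
    using assms by (intro mult_left_mono) auto
  also have "\<dots> = a ^ d / b ^ Suc d"
    using assms by (simp add: power_divide)
  finally have "(a / b) ^ Suc d * F \<le> a ^ d / b ^ Suc d" .
  moreover have "(b ^ d - a ^ d) / b ^ Suc d = 1 / b - a ^ d / b ^ Suc d"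
    using assms by (simp add: diff_divide_distrib)
  ultimately show ?thesis by linarith
qed

lemma weighted_increment_sum_le:
  assumes "\<And>j. e j \<ge> 1" and "\<And>j. j \<le> k \<Longrightarrow> a j > 0"
  shows "weighted_increment_sum a e k \<le> 1 / a k"
  using assms(2)
proof (induction k)
  case 0
  then show ?case by simp
next
  case (Suc k)
  obtain d where d: "e (Suc k) = Suc d"
    using assms(1)[of "Suc k"] not0_implies_Suc by fastforce
  have "a k > 0" "a (Suc k) > 0" "weighted_increment_sum a e k \<le> 1 / a k"
    using Suc by auto
  then show ?case
    unfolding weighted_increment_sum_Suc d diff_Suc_1 by (rule weighted_increment_step_le)
qed

theorem lemma9:
  fixes m :: nat and \<alpha> :: "nat \<Rightarrow> real"
  assumes "m \<ge> 1"
    and "\<And>k. k \<le> m + 1 \<Longrightarrow> \<alpha> k > 0"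
  shows "(\<Sum>i = 1..m+1.
            (\<Prod>j = i+1..m+1. (\<alpha> (j - 1) / \<alpha> j) ^ (2 ^ (m + 2 - j)))
            * (\<alpha> i ^ (2 ^ (m + 2 - i) - 1) - \<alpha> (i - 1) ^ (2 ^ (m + 2 - i) - 1))
            / \<alpha> i ^ (2 ^ (m + 2 - i)))
         \<le> 1 / \<alpha> (m + 1)"
  using weighted_increment_sum_le[of "\<lambda>j. 2 ^ (m + 2 - j)" "m + 1" \<alpha>] assms(2)
  by (simp add: weighted_increment_sum_def)

end
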